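(* Let $X,Y\subseteq\mathbb R^3$ be smooth tropical surfaces of degrees $d$ and $e$ respectively, intersecting transversally, and let $\mathcal C=X\cap Y$. Then $$\sum_{P\in\mathcal C^{(0)}}m_P=de(d+e),$$ where $\mathcal C^{(0)}$ is the set of vertices of $\mathcal C$ and $m_P$ the intersection multiplicity at $P$.
   Context: Over $(\mathbb R,\max,+)$, a tropical polynomial is $f(x)=\max_{a\in\mathcal A}\{\lambda_a+a\cdot x\}$, $\mathcal A\subseteq\mathbb Z^{m}$ finite, $\lambda_a\in\mathbb R$; Newton polytope $\Delta_f=\operatorname{conv}(\mathcal A)$; lifted polytope $\tilde\Delta_f=\operatorname{conv}\{(a,t):a\in\mathcal A,t\le\lambda_a\}$, whose bounded faces project to a regular lattice subdivision $\operatorname{Subdiv}(f)$ of $\Delta_f$. $V_{tr}(f)$ is the non-linear locus of $f$, a polyhedral complex of pure dimension $m-1$, with a bijection $C\mapsto C^\vee$ from $k$-cells of $V_{tr}(f)$ to $(m-k)$-cells of $\operatorname{Subdiv}(f)$, $C^\vee=\operatorname{conv}\{a:\lambda_a+a\cdot x=f(x)\}$ for $x$ in the relative interior of $C$. $V_{tr}(f)$ is smooth of degree $d$ if every maximal cell of $\operatorname{Subdiv}(f)$ is a lattice simplex of volume $1/m!$ and $\Delta_f=\Gamma^m_d:=\operatorname{conv}\{0,de_1,\dots,de_m\}$. For $X_i=V_{tr}(f_i)$, $i=1,\dots,n$, let $U=X_1\cup\dots\cup X_n=V_{tr}(f_1\odot\cdots\odot f_n)$ (the product polynomial has function $f_1+\dots+f_n$),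 and $\operatorname{Subdiv}_U=\operatorname{Subdiv}(f_1\odot\cdots\odot f_n)$. Since $\tilde\Delta_{f_1\odot\cdots\odot f_n}=\tilde\Delta_{f_1}+\dots+\tilde\Delta_{f_n}$, each bounded face decomposes uniquely as a Minkowski sum of bounded faces of the $\tilde\Delta_{f_i}$; projecting gives the privileged representation $\Lambda=\Lambda_1+\dots+\Lambda_n$ of each cell of $\operatorname{Subdiv}_U$. Each cell $C$ of $X_1\cap\dots\cap X_n$ is uniquely $C_1\cap\dots\cap C_n$ with $C_i$ a cell of $X_i$ containing $C$ in its relative interior; $C$ is a cell of $U$ and $C^\vee\in\operatorname{Subdiv}_U$ has privileged representation $C_1^\vee+\dots+C_n^\vee$. The intersection is transversal if for all $J\subseteq\{1,\dots,n\}$, $|J|\ge2$, $\bigcap_{i\in J}X_i$ has dimension $m-|J|$ and every cell $C$ of it satisfies $\dim C^\vee=\sum_{i\in J}\dim C_i^\vee$. When $n=m-1$ and the intersection $I$ is transversal (hence one-dimensional), the intersection multiplicity at a vertex $P$ of $I$ is $m_P=2\operatorname{vol}_m(P^\vee)$, with $P^\vee\in\operatorname{Subdiv}_U$. Here $m=3$, $n=2$. *)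

theory Defs
  imports "HOL-Analysis.Analysis"
begin

text \<open>A tropical polynomial
 is given by a finite nonempty set A of exponent vectors in Z^3 (viewed inside real^3)
 and coefficients lam a (only the values on A matter).\<close>

definition lattice_pt :: "real^3 \<Rightarrow> bool" where
  "lattice_pt a \<longleftrightarrow> (\<forall>i. a $ i \<in> \<int>)"

definition trop_poly :: "(real^3) set \<Rightarrow> bool" where
  "trop_poly A \<longleftrightarrow> finite A \<and> A \<noteq> {} \<and> (\<forall>a\<in>A. lattice_pt a)"

definition trop_eval :: "(real^3) set \<Rightarrow> (real^3 \<Rightarrow> real) \<Rightarrow> real^3 \<Rightarrow> real" where
  "trop_eval A lam x = Max ((\<lambda>a. lam a + inner a x) ` A)"

text \<open>Exponents attaining the maximum at x; its convex hull is the dual cell.\<close>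
definition max_set :: "(real^3) set \<Rightarrow> (real^3 \<Rightarrow> real) \<Rightarrow> real^3 \<Rightarrow> (real^3) set" where
  "max_set A lam x = {a \<in> A. lam a + inner a x = trop_eval A lam x}"

definition trop_hyp :: "(real^3) set \<Rightarrow> (real^3 \<Rightarrow> real) \<Rightarrow> (real^3) set" where
  "trop_hyp A lam = {x. \<not> (\<exists>U c v. open U \<and> x \<in> U \<and>
       (\<forall>y\<in>U. trop_eval A lam y = c + inner v y))}"

definition trop_mult_exps :: "(real^3) set \<Rightarrow> (real^3) set \<Rightarrow> (real^3) set" where
  "trop_mult_exps A B = {a + b | a b. a \<in> A \<and> b \<in> B}"

definition trop_mult_coeff :: "(real^3) set \<Rightarrow> (real^3 \<Rightarrow> real) \<Rightarrow> (real^3) set \<Rightarrow>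
     (real^3 \<Rightarrow> real) \<Rightarrow> real^3 \<Rightarrow> real" where
  "trop_mult_coeff A lam B mu c = Max {lam a + mu b | a b. a \<in> A \<and> b \<in> B \<and> a + b = c}"

definition std_simplex :: "nat \<Rightarrow> (real^3) set" where
  "std_simplex d = convex hull (insert 0 ((\<lambda>i. real d *\<^sub>R axis i 1) ` UNIV))"

definition lattice_simplex :: "(real^3) set \<Rightarrow> bool" where
  "lattice_simplex P \<longleftrightarrow> (\<exists>S. card S = 4 \<and> \<not> affine_dependent S \<and>
      (\<forall>s\<in>S. lattice_pt s) \<and> P = convex hull S)"

text \<open>Smooth tropical surface of degree d: Newton polytope Gamma^3_d, and every maximal
 cell of Subdiv(f) (cells are conv(max_set x); maximal = 3-dimensional) is a lattice
 simplex of volume 1/3! = 1/6.\<close>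
definition smooth_trop :: "(real^3) set \<Rightarrow> (real^3 \<Rightarrow> real) \<Rightarrow> nat \<Rightarrow> bool" where
  "smooth_trop A lam d \<longleftrightarrow> trop_poly A \<and> convex hull A = std_simplex d \<and>
     (\<forall>x. aff_dim (convex hull (max_set A lam x)) = 3 \<longrightarrow>
        lattice_simplex (convex hull (max_set A lam x)) \<and>
        measure lebesgue (convex hull (max_set A lam x)) = 1 / 6)"

text \<open>Cell of X cap Y through x: C_1 cap C_2 where C_i is the cell of X_i containing x in
 its relative interior; here represented by its relative interior
 {y. y lies in relint C_1 and relint C_2}.\<close>
definition inter_cell :: "(real^3) set \<Rightarrow> (real^3 \<Rightarrow> real) \<Rightarrow> (real^3) set \<Rightarrow>
     (real^3 \<Rightarrow> real) \<Rightarrow> real^3 \<Rightarrow> (real^3) set" where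
  "inter_cell A lam B mu x =
     {y. max_set A lam y = max_set A lam x \<and> max_set B mu y = max_set B mu x}"

text \<open>Dual cell C^vee in Subdiv_U of the cell of U through x.\<close>
definition dual_cell_U :: "(real^3) set \<Rightarrow> (real^3 \<Rightarrow> real) \<Rightarrow> (real^3) set \<Rightarrow>
     (real^3 \<Rightarrow> real) \<Rightarrow> real^3 \<Rightarrow> (real^3) set" where
  "dual_cell_U A lam B mu x =
     convex hull (max_set (trop_mult_exps A B) (trop_mult_coeff A lam B mu) x)"

definition transversal :: "(real^3) set \<Rightarrow> (real^3 \<Rightarrow> real) \<Rightarrow> (real^3) set \<Rightarrow>
     (real^3 \<Rightarrow> real) \<Rightarrow> bool" where
  "transversal A lam B mu \<longleftrightarrow>
     (let I = trop_hyp A lam \<inter> trop_hyp B mu in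
       (\<forall>x\<in>I. aff_dim (inter_cell A lam B mu x) \<le> 1) \<and>
       (\<exists>x\<in>I. aff_dim (inter_cell A lam B mu x) = 1) \<and>
       (\<forall>x\<in>I. aff_dim (dual_cell_U A lam B mu x) =
            aff_dim (convex hull (max_set A lam x)) + aff_dim (convex hull (max_set B mu x))))"

definition inter_vertices :: "(real^3) set \<Rightarrow> (real^3 \<Rightarrow> real) \<Rightarrow> (real^3) set \<Rightarrow>
     (real^3 \<Rightarrow> real) \<Rightarrow> (real^3) set" where
  "inter_vertices A lam B mu =
     {x \<in> trop_hyp A lam \<inter> trop_hyp B mu. inter_cell A lam B mu x = {x}}"

definition int_mult :: "(real^3) set \<Rightarrow> (real^3 \<Rightarrow> real) \<Rightarrow> (real^3) set \<Rightarrow>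
     (real^3 \<Rightarrow> real) \<Rightarrow> real^3 \<Rightarrow> real" where
  "int_mult A lam B mu P = 2 * measure lebesgue (dual_cell_U A lam B mu P)"

end

theory Submission
  imports Defs
begin

text \<open>The maximal cells of a regular subdivision tile the Newton polytope, so their volumes add
  up to its volume. For the product \<open>f \<odot> g\<close>, with Newton polytope
  \<open>\<Gamma>\<^sub>d + \<Gamma>\<^sub>e = \<Gamma>\<^sub>d\<^sub>+\<^sub>e\<close>, a maximal cell is a Minkowski sum \<open>C\<^sub>1\<^sup>\<or> + C\<^sub>2\<^sup>\<or>\<close>:
  either one summand is a point and the cell is a translate of a maximal cell of \<open>f\<close> or \<open>g\<close>,
  or, by transversality, the dimensions are 1 + 2 or 2 + 1 and the cell is \<open>P\<^sup>\<or>\<close> for a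
  vertex \<open>P\<close> of \<open>X \<inter> Y\<close>. Hence
  \<open>\<Sum> m\<^sub>P = 2 (vol \<Gamma>\<^sub>d\<^sub>+\<^sub>e - vol \<Gamma>\<^sub>d - vol \<Gamma>\<^sub>e) = ((d+e)\<^sup>3 - d\<^sup>3 - e\<^sup>3) / 3 = de(d+e)\<close>.\<close>

subsection \<open>Tropical polynomials and their maximising sets\<close>

lemma trop_eval_ge:
  assumes "finite A" "a \<in> A"
  shows "lam a + inner a x \<le> trop_eval A lam x"
  using assms unfolding trop_eval_def by (intro Max_ge) auto

lemma max_set_subset: "max_set A lam x \<subseteq> A"
  unfolding max_set_def by auto

lemma finite_max_set: "finite A \<Longrightarrow> finite (max_set A lam x)"
  by (rule finite_subset[OF max_set_subset])

lemma trop_eval_eq_if_mem_max_set: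
  "a \<in> max_set A lam x \<Longrightarrow> trop_eval A lam x = lam a + inner a x"
  unfolding max_set_def by simp

lemma max_set_nonempty:
  assumes "finite A" "A \<noteq> {}"
  shows "max_set A lam x \<noteq> {}"
proof -
  have "trop_eval A lam x \<in> (\<lambda>a. lam a + inner a x) ` A"
    unfolding trop_eval_def using assms by (intro Max_in) auto
  then show ?thesis unfolding max_set_def by force
qed

lemma aff_dim_max_set_nonneg:
  assumes "finite A" "A \<noteq> {}"
  shows "aff_dim (max_set A lam x) \<ge> 0"
  using max_set_nonempty[OF assms, of lam x] by (subst not_less[symmetric]) simp

lemma continuous_on_trop_eval:
  assumes "finite A" "A \<noteq> {}"
  shows "continuous_on UNIV (trop_eval A lam)"
  using assms
proof (induction A rule: finite_ne_induct)
  case (singleton a)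
  have "trop_eval {a} lam = (\<lambda>x. lam a + inner a x)"
    unfolding trop_eval_def by (rule ext) simp
  then show ?case by (simp add: continuous_intros)
next
  case (insert a F)
  have "trop_eval (insert a F) lam = (\<lambda>x. max (lam a + inner a x) (trop_eval F lam x))"
    unfolding trop_eval_def using insert.hyps by (intro ext) (simp add: Max_insert)
  then show ?case using insert.IH by (simp add: continuous_intros)
qed

lemma exists_pos_mult_norm_less:
  fixes v :: "'a::real_normed_vector"
  assumes "e > 0"
  shows "\<exists>t>0. t * norm v < e"
proof -
  define t where "t = e / (norm v + 1)"
  have den: "norm v + 1 > 0" by (smt (verit) norm_ge_zero)
  have t: "t > 0" unfolding t_def using assms den by (rule divide_pos_pos)
  have "t * norm v < t * (norm v + 1)" using t by simp
  also have "\<dots> = e" unfolding t_def using den by simp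
  finally show ?thesis using t by blast
qed

text \<open>Terms that are not maximal at \<open>x\<close> stay strictly below some maximal term \<open>a\<^sub>0\<close> on a
  neighbourhood, an intersection of finitely many open half-spaces.\<close>
lemma max_set_locally_subset:
  assumes "finite A" "A \<noteq> {}"
  shows "\<exists>e>0. \<forall>y. dist y x < e \<longrightarrow> max_set A lam y \<subseteq> max_set A lam x"
proof -
  obtain a0 where a0: "a0 \<in> max_set A lam x" using max_set_nonempty[OF assms] by blast
  define N where "N = (\<Inter>a\<in>A - max_set A lam x. {y. inner (a - a0) y < lam a0 - lam a})"
  have "open N" unfolding N_def using assms(1) by (intro open_INT) (auto intro: open_halfspace_lt)
  moreover have "x \<in> N"
  proof -
    have "inner (a - a0) x < lam a0 - lam a" if "a \<in> A" "a \<notin> max_set A lam x" for a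
      using trop_eval_ge[OF assms(1) that(1), of lam x] that
        trop_eval_eq_if_mem_max_set[OF a0] unfolding max_set_def
      by (auto simp: inner_diff_left)
    then show ?thesis unfolding N_def by auto
  qed
  ultimately obtain e where e: "e > 0" "ball x e \<subseteq> N" using open_contains_ball by blast
  have "b \<in> max_set A lam x" if y: "dist y x < e" and b: "b \<in> max_set A lam y" for y b
  proof (rule ccontr)
    assume "b \<notin> max_set A lam x"
    moreover have "y \<in> N" using e(2) y by (auto simp: dist_commute subset_iff)
    ultimately have "inner (b - a0) y < lam a0 - lam b"
      using b max_set_subset unfolding N_def by blast
    moreover have "lam a0 + inner a0 y \<le> trop_eval A lam y"
      using a0 max_set_subset by (intro trop_eval_ge[OF assms(1)]) auto
    ultimately show False using trop_eval_eq_if_mem_max_set[OF b] by (simp add: inner_diff_left)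
  qed
  then show ?thesis using e(1) by blast
qed

subsection \<open>The tropical hypersurface\<close>

lemma not_mem_trop_hyp_if_max_set_singleton:
  assumes "finite A" "A \<noteq> {}" "max_set A lam x = {a}"
  shows "x \<notin> trop_hyp A lam"
proof -
  obtain e where e: "e > 0" "\<And>y. dist y x < e \<Longrightarrow> max_set A lam y \<subseteq> max_set A lam x"
    using max_set_locally_subset[OF assms(1,2)] by blast
  have "trop_eval A lam y = lam a + inner a y" if "y \<in> ball x e" for y
  proof -
    have "max_set A lam y \<subseteq> {a}" using e(2) assms(3) that by (simp add: dist_commute)
    then have "max_set A lam y = {a}" using max_set_nonempty[OF assms(1,2)] by blast
    then show ?thesis by (simp add: trop_eval_eq_if_mem_max_set)
  qed
  then have "open (ball x e) \<and> x \<in> ball x e \<and> (\<forall>y\<in>ball x e. trop_eval A lam y = lam a + inner a y)"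
    using e(1) by simp
  then show ?thesis unfolding trop_hyp_def by blast
qed

text \<open>If \<open>f\<close> is affine with gradient \<open>v\<close> near \<open>x\<close>, every maximal term \<open>a\<close> satisfies
  \<open>f - (lam a + \<langle>a,\<cdot>\<rangle>) \<ge> 0\<close> near \<open>x\<close> with equality at \<open>x\<close>; this affine function has gradient
  \<open>v - a\<close>, so moving from \<open>x\<close> against the gradient forces \<open>v = a\<close>.\<close>
lemma max_set_singleton_if_not_mem_trop_hyp:
  assumes "finite A" "A \<noteq> {}" "x \<notin> trop_hyp A lam"
  shows "\<exists>a. max_set A lam x = {a}"
proof -
  obtain U c v where U: "open U" "x \<in> U" "\<And>y. y \<in> U \<Longrightarrow> trop_eval A lam y = c + inner v y"
    using assms(3) unfolding trop_hyp_def by blast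
  obtain e where e: "e > 0" "ball x e \<subseteq> U" using U(1,2) open_contains_ball by blast
  have "a = v" if a: "a \<in> max_set A lam x" for a
  proof -
    define u where "u = v - a"
    obtain t where t: "t > 0" "t * norm u < e" using exists_pos_mult_norm_less[OF e(1)] by blast
    define y where "y = x - t *\<^sub>R u"
    have "dist y x < e" unfolding y_def using t by (simp add: dist_norm)
    then have "y \<in> U" using e(2) by (auto simp: dist_commute subset_iff)
    then have "lam a + inner a y \<le> c + inner v y"
      using trop_eval_ge[OF assms(1), of a lam y] a max_set_subset U(3) by fastforce
    moreover have "lam a + inner a x = c + inner v x"
      using trop_eval_eq_if_mem_max_set[OF a] U(3)[OF U(2)] by simp
    moreover have "c + inner v y - (lam a + inner a y)
        = (c + inner v x - (lam a + inner a x)) - t * inner u u"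
      unfolding y_def u_def by (simp add: inner_diff_right inner_diff_left algebra_simps)
    ultimately have "t * inner u u \<le> 0" by linarith
    then have "inner u u \<le> 0" using t(1) by (simp add: mult_le_0_iff)
    then have "u = 0" by (metis inner_gt_zero_iff not_le)
    then show ?thesis unfolding u_def by simp
  qed
  then have "max_set A lam x = {v}" using max_set_nonempty[OF assms(1,2)] by blast
  then show ?thesis by blast
qed

lemma mem_trop_hyp_iff:
  assumes "finite A" "A \<noteq> {}"
  shows "x \<in> trop_hyp A lam \<longleftrightarrow> aff_dim (max_set A lam x) \<ge> 1"
proof
  assume "x \<in> trop_hyp A lam"
  then have "aff_dim (max_set A lam x) \<noteq> 0"
    using not_mem_trop_hyp_if_max_set_singleton[OF assms] aff_dim_eq_0 by metis
  moreover have "aff_dim (max_set A lam x) \<ge> 0" by (rule aff_dim_max_set_nonneg[OF assms])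
  ultimately show "aff_dim (max_set A lam x) \<ge> 1" by linarith
next
  assume "aff_dim (max_set A lam x) \<ge> 1"
  then show "x \<in> trop_hyp A lam"
    using max_set_singleton_if_not_mem_trop_hyp[OF assms] by fastforce
qed

subsection \<open>The regular subdivision dual to a tropical polynomial\<close>

lemma inner_max_set_diff_le:
  assumes "finite A" "a \<in> max_set A lam x" "b \<in> max_set A lam y"
  shows "inner b (x - y) \<le> inner a (x - y)"
proof -
  have "a \<in> A" "b \<in> A" using assms(2,3) max_set_subset by blast+
  have "lam b + inner b x \<le> lam a + inner a x"
    using trop_eval_ge[OF assms(1) \<open>b \<in> A\<close>, of lam x] trop_eval_eq_if_mem_max_set[OF assms(2)]
    by simp
  moreover have "lam a + inner a y \<le> lam b + inner b y"
    using trop_eval_ge[OF assms(1) \<open>a \<in> A\<close>, of lam y] trop_eval_eq_if_mem_max_set[OF assms(3)]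
    by simp
  ultimately show ?thesis by (simp add: inner_diff_right)
qed

text \<open>For \<open>x \<noteq> y\<close> the hyperplane orthogonal to \<open>x - y\<close> through the maximal value of
  \<open>\<langle>\<cdot>, x - y\<rangle>\<close> on the cell of \<open>y\<close> separates the two cells.\<close>
lemma negligible_inter_convex_hull_max_set:
  assumes "finite A" "A \<noteq> {}" "x \<noteq> y"
  shows "negligible (convex hull (max_set A lam x) \<inter> convex hull (max_set A lam y))"
proof -
  define w where "w = x - y"
  define c where "c = Max ((\<lambda>b. inner b w) ` max_set A lam y)"
  have fin: "finite ((\<lambda>b. inner b w) ` max_set A lam y)" using finite_max_set[OF assms(1)] by blast
  have ne: "(\<lambda>b. inner b w) ` max_set A lam y \<noteq> {}" using max_set_nonempty[OF assms(1,2)] by blast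
  have "c \<le> inner a w" if "a \<in> max_set A lam x" for a
  proof -
    obtain b where "b \<in> max_set A lam y" "c = inner b w"
      using Max_in[OF fin ne] unfolding c_def by blast
    then show ?thesis using inner_max_set_diff_le[OF assms(1) that] unfolding w_def by simp
  qed
  then have "convex hull (max_set A lam x) \<subseteq> {p. inner w p \<ge> c}"
    by (intro hull_minimal convex_halfspace_ge) (auto simp: inner_commute)
  moreover have "convex hull (max_set A lam y) \<subseteq> {p. inner w p \<le> c}"
    using Max_ge[OF fin] unfolding c_def
    by (intro hull_minimal convex_halfspace_le) (auto simp: inner_commute)
  ultimately have "convex hull (max_set A lam x) \<inter> convex hull (max_set A lam y) \<subseteq> {p. inner w p = c}"
    by fastforce
  moreover have "negligible {p. inner w p = c}"
    using assms(3) unfolding w_def by (intro negligible_hyperplane) simp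
  ultimately show ?thesis using negligible_subset by blast
qed

text \<open>A full-dimensional set of common maximal terms pins down the point: on it
  \<open>\<langle>\<cdot>, x - y\<rangle>\<close> is constant, so it lies in a hyperplane unless \<open>x = y\<close>.\<close>
lemma eq_if_full_dim_subset_max_sets:
  assumes "S \<subseteq> max_set A lam x" "S \<subseteq> max_set A lam y" "aff_dim S = 3"
  shows "x = y"
proof (rule ccontr)
  assume "x \<noteq> y"
  define k where "k = trop_eval A lam x - trop_eval A lam y"
  have "S \<subseteq> {c. inner (x - y) c = k}"
  proof
    fix c assume "c \<in> S"
    then have "c \<in> max_set A lam x" "c \<in> max_set A lam y" using assms(1,2) by auto
    then show "c \<in> {c. inner (x - y) c = k}"
      using trop_eval_eq_if_mem_max_set[of c A lam] unfolding k_def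
      by (simp add: inner_commute inner_diff_right)
  qed
  then have "aff_dim S \<le> aff_dim {c. inner (x - y) c = k}" by (rule aff_dim_subset)
  also have "\<dots> = 2" using \<open>x \<noteq> y\<close> by simp
  finally show False using assms(3) by simp
qed

lemma max_set_translate_eq:
  assumes "finite A" "A \<noteq> {}" "\<And>a. a \<in> max_set A lam x \<Longrightarrow> inner a v = k"
  shows "\<exists>e>0. \<forall>t. \<bar>t\<bar> < e \<longrightarrow> max_set A lam (x + t *\<^sub>R v) = max_set A lam x"
proof -
  obtain e0 where e0: "e0 > 0" "\<And>y. dist y x < e0 \<Longrightarrow> max_set A lam y \<subseteq> max_set A lam x"
    using max_set_locally_subset[OF assms(1,2)] by blast
  define e where "e = e0 / (norm v + 1)"
  have den: "norm v + 1 > 0" by (smt (verit) norm_ge_zero)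
  have e: "e > 0" unfolding e_def using e0(1) den by (rule divide_pos_pos)
  have "max_set A lam (x + t *\<^sub>R v) = max_set A lam x" if t: "\<bar>t\<bar> < e" for t
  proof -
    define y where "y = x + t *\<^sub>R v"
    have "\<bar>t\<bar> * norm v \<le> \<bar>t\<bar> * (norm v + 1)" by (simp add: mult_left_mono)
    also have "\<dots> < e * (norm v + 1)" using t den by (rule mult_strict_right_mono)
    also have "\<dots> = e0" unfolding e_def using den by simp
    finally have "dist y x < e0" unfolding y_def by (simp add: dist_norm)
    then have sub: "max_set A lam y \<subseteq> max_set A lam x" by (rule e0(2))
    obtain a1 where a1: "a1 \<in> max_set A lam y" using max_set_nonempty[OF assms(1,2)] by blast
    have shift: "lam a + inner a y = (lam a + inner a x) + t * k" if "a \<in> max_set A lam x" for a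
      unfolding y_def using assms(3)[OF that] by (simp add: inner_add_right)
    have "trop_eval A lam y = trop_eval A lam x + t * k"
      using trop_eval_eq_if_mem_max_set[OF a1] shift[of a1] a1 sub
        trop_eval_eq_if_mem_max_set[of a1 A lam x] by auto
    then have "max_set A lam x \<subseteq> max_set A lam y"
      using shift trop_eval_eq_if_mem_max_set[of _ A lam x] max_set_subset[of A lam x]
      unfolding max_set_def[of A lam y] by auto
    with sub show ?thesis unfolding y_def by blast
  qed
  then show ?thesis using e by blast
qed

lemma convex_hull_inner_le_some:
  fixes q x :: "'a::real_inner"
  assumes "q \<in> convex hull A"
  shows "\<exists>a\<in>A. inner q x \<le> inner a x"
proof (rule ccontr)
  assume "\<not> ?thesis"
  then have "A \<subseteq> {z. inner x z < inner q x}" by (auto simp: inner_commute not_le)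
  then have "convex hull A \<subseteq> {z. inner x z < inner q x}"
    by (rule hull_minimal) (rule convex_halfspace_lt)
  then show False using assms by (auto simp: inner_commute)
qed

text \<open>A point \<open>p\<close> with \<open>ball p r\<close> inside the Newton polytope makes \<open>f - \<langle>p,\<cdot>\<rangle>\<close> grow
  at least like \<open>r/2 \<cdot> \<parallel>x\<parallel>\<close>: test \<open>f\<close> against the point \<open>p + (r/2) x/\<parallel>x\<parallel>\<close> of the polytope.\<close>
lemma trop_eval_minus_inner_coercive:
  assumes "finite A" "r > 0" "ball p r \<subseteq> convex hull A"
  shows "Min (lam ` A) + (r/2) * norm x \<le> trop_eval A lam x - inner p x"
proof -
  have "A \<noteq> {}" using assms(2,3) by (metis centre_in_ball convex_hull_empty empty_iff subsetD)
  have Min_le: "Min (lam ` A) \<le> lam a" if "a \<in> A" for a using assms(1) that by simp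
  show ?thesis
  proof (cases "x = 0")
    case True
    then show ?thesis
      using \<open>A \<noteq> {}\<close> trop_eval_ge[OF assms(1), of _ lam 0] Min_le by fastforce
  next
    case False
    define q where "q = p + ((r/2) / norm x) *\<^sub>R x"
    have "dist p q = r/2" unfolding q_def using False assms(2) by (simp add: dist_norm)
    then have "q \<in> convex hull A" using assms(2,3) by (auto simp: subset_iff)
    then obtain a where a: "a \<in> A" "inner q x \<le> inner a x" using convex_hull_inner_le_some by blast
    have "inner q x = inner p x + (r/2) * norm x"
      unfolding q_def using False
      by (simp add: inner_add_left power2_norm_eq_inner[symmetric] power2_eq_square)
    then show ?thesis using trop_eval_ge[OF assms(1) a(1), of lam x] Min_le[OF a(1)] a(2) by linarith
  qed
qed

lemma trop_eval_minus_inner_attains_min: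
  assumes "finite A" "p \<in> interior (convex hull A)"
  shows "\<exists>x0. \<forall>y. trop_eval A lam x0 - inner p x0 \<le> trop_eval A lam y - inner p y"
proof -
  obtain r where r: "r > 0" "ball p r \<subseteq> convex hull A" using assms(2) mem_interior by blast
  then have "A \<noteq> {}" by (metis centre_in_ball convex_hull_empty empty_iff subsetD)
  define phi where "phi x = trop_eval A lam x - inner p x" for x
  define L where "L = Min (lam ` A)"
  have lower: "L + (r/2) * norm x \<le> phi x" for x
    unfolding L_def phi_def by (rule trop_eval_minus_inner_coercive[OF assms(1) r])
  define R where "R = (phi 0 - L) * 2 / r + 1"
  have "L \<le> phi 0" using lower[of 0] by simp
  then have R0: "R > 0" unfolding R_def using r by (simp add: add_nonneg_pos)
  have "continuous_on (cball 0 R) phi"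
    unfolding phi_def using continuous_on_trop_eval[OF assms(1) \<open>A \<noteq> {}\<close>, of lam]
    by (intro continuous_intros) (auto intro: continuous_on_subset)
  moreover have "cball 0 R \<noteq> {}" using R0 by simp
  ultimately obtain x0 where x0: "x0 \<in> cball 0 R" "\<forall>y\<in>cball 0 R. phi x0 \<le> phi y"
    using continuous_attains_inf[OF compact_cball] by blast
  have "phi x0 \<le> phi y" for y
  proof (cases "y \<in> cball 0 R")
    case False
    then have "(r/2) * R < (r/2) * norm y" using r by simp
    moreover have "(r/2) * R = phi 0 - L + r/2" unfolding R_def using r by (simp add: field_simps)
    moreover have "phi x0 \<le> phi 0" using x0(2) R0 by simp
    ultimately show ?thesis using lower[of y] r by linarith
  qed (use x0 in blast)
  then show ?thesis unfolding phi_def by blast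
qed

text \<open>Subgradient characterisation: if \<open>p\<close> lay outside the cell of a minimiser \<open>x0\<close> of
  \<open>f - \<langle>p,\<cdot>\<rangle>\<close>, moving \<open>x0\<close> slightly along a separating direction would decrease it.\<close>
lemma mem_convex_hull_max_set_if_min:
  assumes "finite A" "A \<noteq> {}"
    and min: "\<And>y. trop_eval A lam x0 - inner p x0 \<le> trop_eval A lam y - inner p y"
  shows "p \<in> convex hull (max_set A lam x0)"
proof (rule ccontr)
  define S where "S = max_set A lam x0"
  assume "p \<notin> convex hull (max_set A lam x0)"
  moreover have "closed (convex hull S)"
    unfolding S_def using finite_max_set[OF assms(1)]
    by (intro compact_imp_closed finite_imp_compact_convex_hull)
  ultimately obtain a b where ab: "inner a p < b" "\<And>z. z \<in> convex hull S \<Longrightarrow> inner a z > b"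
    using separating_hyperplane_closed_point[OF convex_convex_hull] unfolding S_def by metis
  have sv: "inner z (- a) < inner p (- a)" if "z \<in> S" for z
    using ab(1) ab(2)[OF hull_inc[OF that]] by (simp add: inner_commute)
  obtain e0 where e0: "e0 > 0" "\<And>y. dist y x0 < e0 \<Longrightarrow> max_set A lam y \<subseteq> S"
    using max_set_locally_subset[OF assms(1,2)] unfolding S_def by blast
  obtain t where t: "t > 0" "t * norm (- a) < e0" using exists_pos_mult_norm_less[OF e0(1)] by blast
  define y where "y = x0 + t *\<^sub>R (- a)"
  have "dist y x0 < e0" unfolding y_def using t by (simp add: dist_norm)
  then obtain a1 where a1: "a1 \<in> max_set A lam y" "a1 \<in> S"
    using e0(2) max_set_nonempty[OF assms(1,2)] by blast
  have "trop_eval A lam y = trop_eval A lam x0 + t * inner a1 (- a)"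
    using trop_eval_eq_if_mem_max_set[OF a1(1)] trop_eval_eq_if_mem_max_set[of a1 A lam x0] a1(2)
    unfolding y_def S_def by (simp add: inner_diff_right)
  then have "trop_eval A lam y - inner p y
      = trop_eval A lam x0 - inner p x0 + t * (inner a1 (- a) - inner p (- a))"
    unfolding y_def by (simp add: inner_add_right algebra_simps)
  moreover have "t * (inner a1 (- a) - inner p (- a)) < 0"
    using t(1) sv[OF a1(2)] by (simp add: mult_pos_neg)
  ultimately show False using min[of y] by linarith
qed

lemma interior_convex_hull_subset_cells:
  assumes "finite A" "A \<noteq> {}" "p \<in> interior (convex hull A)"
  shows "\<exists>x. p \<in> convex hull (max_set A lam x)"
  using trop_eval_minus_inner_attains_min[OF assms(1,3)] mem_convex_hull_max_set_if_min[OF assms(1,2)]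
  by blast

text \<open>Points whose dual cell is a maximal cell of \<open>Subdiv(f)\<close>, i.e. the vertices of \<open>V\<^sub>t\<^sub>r(f)\<close>.\<close>
definition trop_vertices :: "(real^3) set \<Rightarrow> (real^3 \<Rightarrow> real) \<Rightarrow> (real^3) set" where
  "trop_vertices A lam = {x. aff_dim (max_set A lam x) = 3}"

lemma negligible_convex_hull_if_aff_dim_less:
  fixes Q :: "'a::euclidean_space set"
  assumes "aff_dim Q < DIM('a)"
  shows "negligible (convex hull Q)"
proof -
  have "interior (convex hull Q) = {}"
    using assms by (simp add: interior_rel_interior_gen aff_dim_convex_hull)
  then have "convex hull Q \<subseteq> frontier (convex hull Q)"
    using closure_subset by (auto simp: frontier_def)
  moreover have "negligible (frontier (convex hull Q))" by (rule negligible_convex_frontier) simp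
  ultimately show ?thesis using negligible_subset by blast
qed

lemma finite_trop_vertices:
  assumes "finite A"
  shows "finite (trop_vertices A lam)"
proof -
  have "inj_on (max_set A lam) (trop_vertices A lam)"
  proof (rule inj_onI)
    fix x y assume "x \<in> trop_vertices A lam" "max_set A lam x = max_set A lam y"
    then show "x = y"
      unfolding trop_vertices_def by (intro eq_if_full_dim_subset_max_sets[of "max_set A lam x"]) auto
  qed
  moreover have "finite (max_set A lam ` trop_vertices A lam)"
    using assms max_set_subset by (meson Pow_iff finite_Pow_iff finite_subset image_subset_iff)
  ultimately show ?thesis using finite_imageD by blast
qed

text \<open>Away from the boundary of the Newton polytope, the lower-dimensional cells cover
  whatever the maximal cells miss.\<close>
lemma negligible_convex_hull_diff_maximal_cells:
  assumes "finite A" "A \<noteq> {}"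
  shows "negligible (convex hull A - (\<Union>x\<in>trop_vertices A lam. convex hull (max_set A lam x)))"
proof -
  define F where "F = (\<lambda>Q. convex hull Q) ` {Q. Q \<subseteq> A \<and> aff_dim Q \<noteq> 3}"
  have "negligible (\<Union>F)"
  proof (rule negligible_Union)
    show "finite F" unfolding F_def using assms(1) by simp
    have "negligible (convex hull Q)" if "aff_dim Q \<noteq> 3" for Q :: "(real^3) set"
      using that aff_dim_le_DIM[of Q] by (intro negligible_convex_hull_if_aff_dim_less) simp
    then show "negligible X" if "X \<in> F" for X
      using that unfolding F_def by blast
  qed
  moreover have "negligible (frontier (convex hull A))" by (rule negligible_convex_frontier) simp
  moreover have "convex hull A - (\<Union>x\<in>trop_vertices A lam. convex hull (max_set A lam x))
      \<subseteq> frontier (convex hull A) \<union> \<Union>F"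
  proof
    fix p assume p: "p \<in> convex hull A - (\<Union>x\<in>trop_vertices A lam. convex hull (max_set A lam x))"
    show "p \<in> frontier (convex hull A) \<union> \<Union>F"
    proof (cases "p \<in> interior (convex hull A)")
      case True
      then obtain x where x: "p \<in> convex hull (max_set A lam x)"
        using interior_convex_hull_subset_cells[OF assms] by blast
      then have "aff_dim (max_set A lam x) \<noteq> 3" using p unfolding trop_vertices_def by blast
      then have "convex hull (max_set A lam x) \<in> F" unfolding F_def using max_set_subset by blast
      then show ?thesis using x by blast
    qed (use p closure_subset in \<open>auto simp: frontier_def\<close>)
  qed
  ultimately show ?thesis by (metis negligible_Un negligible_subset)
qed

lemma sum_measure_maximal_cells:
  assumes "finite A" "A \<noteq> {}"
  shows "(\<Sum>x\<in>trop_vertices A lam. measure lebesgue (convex hull (max_set A lam x)))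
    = measure lebesgue (convex hull A)"
proof -
  define T where "T = (\<Union>x\<in>trop_vertices A lam. convex hull (max_set A lam x))"
  have cell_lmeasurable: "convex hull (max_set A lam x) \<in> lmeasurable" for x
    using finite_max_set[OF assms(1)] by (intro lmeasurable_compact finite_imp_compact_convex_hull)
  have "measure lebesgue T = (\<Sum>x\<in>trop_vertices A lam. measure lebesgue (convex hull (max_set A lam x)))"
    unfolding T_def
    using finite_trop_vertices[OF assms(1)] cell_lmeasurable negligible_inter_convex_hull_max_set[OF assms]
    by (intro measure_negligible_finite_Union_image) (auto simp: pairwise_def)
  moreover have "measure lebesgue T = measure lebesgue (convex hull A)"
  proof (rule measure_negligible_symdiff)
    show "convex hull A \<in> lmeasurable"
      using assms(1) by (intro lmeasurable_compact finite_imp_compact_convex_hull)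
    have "T \<subseteq> convex hull A" unfolding T_def using hull_mono[OF max_set_subset] by blast
    then show "negligible (convex hull A - T \<union> (T - convex hull A))"
      using negligible_convex_hull_diff_maximal_cells[OF assms] unfolding T_def by simp
  qed
  ultimately show ?thesis by simp
qed

subsection \<open>Tropical products\<close>

lemma trop_mult_exps_eq_set_plus: "trop_mult_exps A B = A + B"
  unfolding trop_mult_exps_def set_plus_def by blast

lemma finite_trop_mult_coeff_candidates:
  assumes "finite A" "finite B"
  shows "finite {lam a + mu b | a b. a \<in> A \<and> b \<in> B \<and> a + b = c}"
proof (rule finite_subset)
  show "{lam a + mu b | a b. a \<in> A \<and> b \<in> B \<and> a + b = c} \<subseteq> (\<lambda>(a, b). lam a + mu b) ` (A \<times> B)"
    by (auto simp: image_iff)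
qed (use assms in simp)

lemma trop_mult_coeff_ge:
  assumes "finite A" "finite B" "a \<in> A" "b \<in> B"
  shows "lam a + mu b \<le> trop_mult_coeff A lam B mu (a + b)"
  unfolding trop_mult_coeff_def using finite_trop_mult_coeff_candidates[OF assms(1,2)] assms(3,4)
  by (intro Max_ge) blast+

lemma trop_mult_coeff_attained:
  assumes "finite A" "finite B" "c \<in> trop_mult_exps A B"
  shows "\<exists>a\<in>A. \<exists>b\<in>B. a + b = c \<and> trop_mult_coeff A lam B mu c = lam a + mu b"
proof -
  have "trop_mult_coeff A lam B mu c \<in> {lam a + mu b | a b. a \<in> A \<and> b \<in> B \<and> a + b = c}"
    unfolding trop_mult_coeff_def using finite_trop_mult_coeff_candidates[OF assms(1,2)] assms(3)
    by (intro Max_in) (auto simp: trop_mult_exps_def)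
  then show ?thesis by blast
qed

lemma trop_mult_term_le:
  assumes "finite A" "finite B" "c \<in> trop_mult_exps A B"
  shows "trop_mult_coeff A lam B mu c + inner c x \<le> trop_eval A lam x + trop_eval B mu x"
proof -
  obtain a b where "a \<in> A" "b \<in> B" "a + b = c" "trop_mult_coeff A lam B mu c = lam a + mu b"
    using trop_mult_coeff_attained[OF assms] by blast
  then show ?thesis
    using trop_eval_ge[OF assms(1), of a lam x] trop_eval_ge[OF assms(2), of b mu x]
    by (auto simp: inner_add_left)
qed

lemma trop_eval_trop_mult:
  assumes "finite A" "A \<noteq> {}" "finite B" "B \<noteq> {}"
  shows "trop_eval (trop_mult_exps A B) (trop_mult_coeff A lam B mu) x
    = trop_eval A lam x + trop_eval B mu x"
  unfolding trop_eval_def[of "trop_mult_exps A B"]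
proof (rule Max_eqI)
  show "finite ((\<lambda>c. trop_mult_coeff A lam B mu c + inner c x) ` trop_mult_exps A B)"
    using assms by (simp add: trop_mult_exps_eq_set_plus finite_set_plus)
  show "y \<le> trop_eval A lam x + trop_eval B mu x"
    if "y \<in> (\<lambda>c. trop_mult_coeff A lam B mu c + inner c x) ` trop_mult_exps A B" for y
    using that trop_mult_term_le[OF assms(1,3)] by blast
  obtain a b where a: "a \<in> max_set A lam x" and b: "b \<in> max_set B mu x"
    using max_set_nonempty[OF assms(1,2)] max_set_nonempty[OF assms(3,4)] by blast
  then have ab: "a + b \<in> trop_mult_exps A B"
    using max_set_subset unfolding trop_mult_exps_def by blast
  have "trop_eval A lam x + trop_eval B mu x \<le> trop_mult_coeff A lam B mu (a + b) + inner (a + b) x"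
    using trop_mult_coeff_ge[OF assms(1,3), of a b lam mu] a b max_set_subset
      trop_eval_eq_if_mem_max_set[OF a] trop_eval_eq_if_mem_max_set[OF b]
    by (auto simp: inner_add_left)
  then have "trop_eval A lam x + trop_eval B mu x = trop_mult_coeff A lam B mu (a + b) + inner (a + b) x"
    using trop_mult_term_le[OF assms(1,3) ab, of lam mu x] by linarith
  then show "trop_eval A lam x + trop_eval B mu x
      \<in> (\<lambda>c. trop_mult_coeff A lam B mu c + inner c x) ` trop_mult_exps A B"
    using ab by blast
qed

lemma max_set_trop_mult:
  assumes "finite A" "A \<noteq> {}" "finite B" "B \<noteq> {}"
  shows "max_set (trop_mult_exps A B) (trop_mult_coeff A lam B mu) x
    = max_set A lam x + max_set B mu x"
proof
  note eval = trop_eval_trop_mult[OF assms, of lam mu x]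
  show "max_set (trop_mult_exps A B) (trop_mult_coeff A lam B mu) x \<subseteq> max_set A lam x + max_set B mu x"
  proof
    fix c assume c: "c \<in> max_set (trop_mult_exps A B) (trop_mult_coeff A lam B mu) x"
    then have "c \<in> trop_mult_exps A B" using max_set_subset by blast
    then obtain a b where ab: "a \<in> A" "b \<in> B" "c = a + b"
      "trop_mult_coeff A lam B mu c = lam a + mu b"
      using trop_mult_coeff_attained[OF assms(1,3)] by metis
    have "(lam a + inner a x) + (mu b + inner b x) = trop_eval A lam x + trop_eval B mu x"
      using c eval ab(3,4) unfolding max_set_def by (simp add: inner_add_left algebra_simps)
    moreover have "lam a + inner a x \<le> trop_eval A lam x" "mu b + inner b x \<le> trop_eval B mu x"
      using trop_eval_ge assms(1,3) ab(1,2) by blast+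
    ultimately have "a \<in> max_set A lam x" "b \<in> max_set B mu x"
      using ab(1,2) unfolding max_set_def by auto
    then show "c \<in> max_set A lam x + max_set B mu x" using ab(3) by (auto intro: set_plus_intro)
  qed
  show "max_set A lam x + max_set B mu x \<subseteq> max_set (trop_mult_exps A B) (trop_mult_coeff A lam B mu) x"
  proof
    fix c assume "c \<in> max_set A lam x + max_set B mu x"
    then obtain a b where a: "a \<in> max_set A lam x" and b: "b \<in> max_set B mu x" and c: "c = a + b"
      by (auto elim: set_plus_elim)
    then have cC: "c \<in> trop_mult_exps A B"
      using max_set_subset unfolding trop_mult_exps_def by blast
    have "trop_eval A lam x + trop_eval B mu x \<le> trop_mult_coeff A lam B mu c + inner c x"
      using trop_mult_coeff_ge[OF assms(1,3), of a b lam mu] a b max_set_subset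
        trop_eval_eq_if_mem_max_set[OF a] trop_eval_eq_if_mem_max_set[OF b] c
      by (auto simp: inner_add_left)
    then show "c \<in> max_set (trop_mult_exps A B) (trop_mult_coeff A lam B mu) x"
      using trop_mult_term_le[OF assms(1,3) cC, of lam mu x] cC eval unfolding max_set_def by simp
  qed
qed

subsection \<open>Standard simplices\<close>

lemma scaleR_image_set_plus_convex:
  fixes G :: "'a::real_vector set"
  assumes "convex G" "s \<ge> 0" "t \<ge> 0"
  shows "(\<lambda>y. s *\<^sub>R y) ` G + (\<lambda>y. t *\<^sub>R y) ` G = (\<lambda>y. (s + t) *\<^sub>R y) ` G"
proof
  show "(\<lambda>y. s *\<^sub>R y) ` G + (\<lambda>y. t *\<^sub>R y) ` G \<subseteq> (\<lambda>y. (s + t) *\<^sub>R y) ` G"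
  proof
    fix z assume "z \<in> (\<lambda>y. s *\<^sub>R y) ` G + (\<lambda>y. t *\<^sub>R y) ` G"
    then obtain y1 y2 where y: "y1 \<in> G" "y2 \<in> G" "z = s *\<^sub>R y1 + t *\<^sub>R y2"
      by (auto elim!: set_plus_elim)
    show "z \<in> (\<lambda>y. (s + t) *\<^sub>R y) ` G"
    proof (cases "s + t = 0")
      case True
      then have "s = 0" "t = 0" using assms(2,3) by linarith+
      then show ?thesis using y by (auto simp: image_iff)
    next
      case False
      then have pos: "s + t > 0" using assms(2,3) by linarith
      have "(s / (s + t)) *\<^sub>R y1 + (t / (s + t)) *\<^sub>R y2 \<in> G"
        using convexD[OF assms(1) y(1,2)] assms(2,3) pos by (simp add: add_divide_distrib[symmetric])
      moreover have "(s + t) *\<^sub>R ((s / (s + t)) *\<^sub>R y1 + (t / (s + t)) *\<^sub>R y2) = z"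
        using pos unfolding y(3) by (simp add: scaleR_add_right)
      ultimately show ?thesis by (metis image_eqI)
    qed
  qed
  show "(\<lambda>y. (s + t) *\<^sub>R y) ` G \<subseteq> (\<lambda>y. s *\<^sub>R y) ` G + (\<lambda>y. t *\<^sub>R y) ` G"
    by (auto simp: scaleR_add_left intro!: set_plus_intro)
qed

lemma std_simplex_eq_scaleR: "std_simplex n = (\<lambda>y. real n *\<^sub>R y) ` (convex hull (insert 0 Basis))"
proof -
  have "insert 0 ((\<lambda>i. real n *\<^sub>R axis i 1) ` UNIV)
      = (\<lambda>y. real n *\<^sub>R y) ` insert (0::real^3) ((\<lambda>i. axis i 1) ` UNIV)"
    by (simp add: image_image)
  moreover have "(\<lambda>i. axis i 1) ` UNIV = (Basis :: (real^3) set)"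
    by (auto simp: Basis_vec_def)
  ultimately show ?thesis unfolding std_simplex_def by (simp only: convex_hull_scaling)
qed

lemma measure_std_simplex: "measure lebesgue (std_simplex n) = real n ^ 3 / 6"
proof -
  have "convex hull (insert 0 Basis) \<in> sets (lborel :: (real^3) measure)"
    unfolding sets_lborel by (intro borel_closed compact_imp_closed finite_imp_compact_convex_hull) auto
  then have "measure lebesgue (convex hull (insert 0 Basis :: (real^3) set)) = 1 / fact DIM(real^3)"
    by (simp add: measure_completion content_std_simplex)
  moreover have "measure lebesgue ((\<lambda>y. real n *\<^sub>R y + 0) ` (convex hull (insert 0 Basis :: (real^3) set)))
      = \<bar>real n\<bar> ^ DIM(real^3) * measure lebesgue (convex hull (insert 0 Basis :: (real^3) set))"
    by (rule measure_lebesgue_affine)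
  ultimately show ?thesis unfolding std_simplex_eq_scaleR by (simp add: fact_numeral)
qed

lemma std_simplex_add: "std_simplex d + std_simplex e = std_simplex (d + e)"
  unfolding std_simplex_eq_scaleR of_nat_add
  by (rule scaleR_image_set_plus_convex) simp_all

subsection \<open>Transversal intersections of two surfaces\<close>

lemma exists_common_normal:
  fixes S T :: "'a::euclidean_space set"
  assumes "S \<noteq> {}" "T \<noteq> {}" "aff_dim S + aff_dim T < DIM('a)"
  shows "\<exists>v. v \<noteq> 0 \<and> (\<forall>a\<in>S. \<forall>a'\<in>S. inner a v = inner a' v) \<and> (\<forall>b\<in>T. \<forall>b'\<in>T. inner b v = inner b' v)"
proof -
  obtain a0 b0 where a0: "a0 \<in> S" and b0: "b0 \<in> T" using assms(1,2) by blast
  define DS where "DS = (+) (- a0) ` S"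
  define DT where "DT = (+) (- b0) ` T"
  obtain BS where BS: "DS \<subseteq> span BS" "card BS = dim DS" "finite BS"
    using basis_exists[of DS] by (metis independent_imp_finite)
  obtain BT where BT: "DT \<subseteq> span BT" "card BT = dim DT" "finite BT"
    using basis_exists[of DT] by (metis independent_imp_finite)
  have "DS \<union> DT \<subseteq> span (BS \<union> BT)"
    using BS(1) BT(1) span_mono[of BS "BS \<union> BT"] span_mono[of BT "BS \<union> BT"] by blast
  then have "dim (DS \<union> DT) \<le> card (BS \<union> BT)" using BS(3) BT(3) by (intro dim_le_card) auto
  also have "\<dots> \<le> card BS + card BT" by (rule card_Un_le)
  also have "int \<dots> = aff_dim S + aff_dim T"
    using BS(2) BT(2) aff_dim_eq_dim[OF hull_inc[OF a0]] aff_dim_eq_dim[OF hull_inc[OF b0]]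
    unfolding DS_def DT_def by simp
  finally have "dim (DS \<union> DT) < DIM('a)" using assms(3) by linarith
  then obtain v where v: "v \<noteq> 0" "span (DS \<union> DT) \<subseteq> {x. v \<bullet> x = 0}"
    using lowdim_subset_hyperplane by blast
  have "inner a v = inner a0 v" if "a \<in> S" for a
  proof -
    have "- a0 + a \<in> span (DS \<union> DT)" unfolding DS_def using that by (simp add: span_base)
    then show ?thesis using v(2) by (auto simp: inner_commute inner_diff_right)
  qed
  moreover have "inner b v = inner b0 v" if "b \<in> T" for b
  proof -
    have "- b0 + b \<in> span (DS \<union> DT)" unfolding DT_def using that by (simp add: span_base)
    then show ?thesis using v(2) by (auto simp: inner_commute inner_diff_right)
  qed
  ultimately show ?thesis using v(1) by metis
qed

text \<open>Two dual edges in \<open>\<real>\<^sup>3\<close> have a common normal \<open>v\<close>; moving along \<open>v\<close> keeps both dual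
  cells, so the point lies on a segment of the intersection curve.\<close>
lemma max_sets_of_dim_one_not_isolated:
  assumes A: "finite A" "A \<noteq> {}" and B: "finite B" "B \<noteq> {}"
    and dims: "aff_dim (max_set A lam x) = 1" "aff_dim (max_set B mu x) = 1"
  shows "\<exists>y. y \<noteq> x \<and> max_set A lam y = max_set A lam x \<and> max_set B mu y = max_set B mu x"
proof -
  have "\<exists>v. v \<noteq> 0 \<and> (\<forall>a\<in>max_set A lam x. \<forall>a'\<in>max_set A lam x. inner a v = inner a' v)
      \<and> (\<forall>b\<in>max_set B mu x. \<forall>b'\<in>max_set B mu x. inner b v = inner b' v)"
    by (rule exists_common_normal) (simp_all add: max_set_nonempty A B dims)
  then obtain v where v: "v \<noteq> 0" "\<forall>a\<in>max_set A lam x. \<forall>a'\<in>max_set A lam x. inner a v = inner a' v"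
      "\<forall>b\<in>max_set B mu x. \<forall>b'\<in>max_set B mu x. inner b v = inner b' v"
    by blast
  obtain a0 b0 where a0: "a0 \<in> max_set A lam x" and b0: "b0 \<in> max_set B mu x"
    using max_set_nonempty[OF A] max_set_nonempty[OF B] by blast
  obtain eA where eA: "eA > 0" "\<And>t. \<bar>t\<bar> < eA \<Longrightarrow> max_set A lam (x + t *\<^sub>R v) = max_set A lam x"
    using max_set_translate_eq[OF A, of lam x v "inner a0 v"] v(2) a0 by blast
  obtain eB where eB: "eB > 0" "\<And>t. \<bar>t\<bar> < eB \<Longrightarrow> max_set B mu (x + t *\<^sub>R v) = max_set B mu x"
    using max_set_translate_eq[OF B, of mu x v "inner b0 v"] v(3) b0 by blast
  define t where "t = min eA eB / 2"
  have "t > 0" "\<bar>t\<bar> < eA" "\<bar>t\<bar> < eB" unfolding t_def using eA(1) eB(1) by auto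
  then show ?thesis using eA(2) eB(2) v(1) by (intro exI[of _ "x + t *\<^sub>R v"]) auto
qed

lemma singleton_plus_eq_translation:
  fixes a :: "'a::ab_semigroup_add"
  shows "{a} + S = (+) a ` S" and "S + {a} = (+) a ` S"
  by (simp_all add: translation_eq_singleton_plus add.commute[of S])

lemma measure_convex_hull_translation:
  fixes S :: "'a::euclidean_space set"
  shows "measure lebesgue (convex hull ((+) a ` S)) = measure lebesgue (convex hull S)"
  by (simp add: convex_hull_translation measure_translation)

lemma aff_dim_set_plus_ge:
  fixes S T :: "'a::euclidean_space set"
  assumes "T \<noteq> {}"
  shows "aff_dim S \<le> aff_dim (S + T)"
proof -
  obtain b where "b \<in> T" using assms by blast
  then have "(+) b ` S \<subseteq> S + T" by (auto simp: add.commute intro: set_plus_intro)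
  then show ?thesis using aff_dim_subset aff_dim_translation_eq by metis
qed

context
  fixes A B :: "(real^3) set" and lam mu :: "real^3 \<Rightarrow> real"
  assumes A: "finite A" "A \<noteq> {}" and B: "finite B" "B \<noteq> {}"
    and transversal: "transversal A lam B mu"
begin

lemma aff_dim_max_set_plus:
  assumes "x \<in> trop_hyp A lam" "x \<in> trop_hyp B mu"
  shows "aff_dim (max_set A lam x + max_set B mu x) = aff_dim (max_set A lam x) + aff_dim (max_set B mu x)"
  using transversal assms unfolding transversal_def Let_def dual_cell_U_def
  by (simp add: aff_dim_convex_hull max_set_trop_mult[OF A B])

lemma trop_vertices_disjoint_trop_hyp:
  shows "x \<in> trop_vertices A lam \<Longrightarrow> x \<notin> trop_hyp B mu"
    and "x \<in> trop_vertices B mu \<Longrightarrow> x \<notin> trop_hyp A lam"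
proof -
  have False if hyp: "x \<in> trop_hyp A lam" "x \<in> trop_hyp B mu"
    and full: "aff_dim (max_set A lam x) = 3 \<or> aff_dim (max_set B mu x) = 3"
  proof -
    have "aff_dim (max_set A lam x) \<ge> 1" "aff_dim (max_set B mu x) \<ge> 1"
      using hyp mem_trop_hyp_iff[OF A] mem_trop_hyp_iff[OF B] by blast+
    then have "aff_dim (max_set A lam x + max_set B mu x) \<ge> 4"
      using full aff_dim_max_set_plus[OF hyp] by linarith
    then show False using aff_dim_le_DIM[of "max_set A lam x + max_set B mu x"] by simp
  qed
  then show "x \<in> trop_vertices A lam \<Longrightarrow> x \<notin> trop_hyp B mu"
    and "x \<in> trop_vertices B mu \<Longrightarrow> x \<notin> trop_hyp A lam"
    using mem_trop_hyp_iff[OF A, of x lam] mem_trop_hyp_iff[OF B, of x mu]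
    unfolding trop_vertices_def by auto
qed

lemma inter_vertices_iff:
  "x \<in> inter_vertices A lam B mu \<longleftrightarrow>
    x \<in> trop_hyp A lam \<and> x \<in> trop_hyp B mu \<and> aff_dim (max_set A lam x + max_set B mu x) = 3"
proof
  assume x: "x \<in> inter_vertices A lam B mu"
  then have hyp: "x \<in> trop_hyp A lam" "x \<in> trop_hyp B mu"
    and isolated: "\<And>y. max_set A lam y = max_set A lam x \<Longrightarrow> max_set B mu y = max_set B mu x \<Longrightarrow> y = x"
    unfolding inter_vertices_def inter_cell_def by auto
  have "\<not> (aff_dim (max_set A lam x) = 1 \<and> aff_dim (max_set B mu x) = 1)"
    using max_sets_of_dim_one_not_isolated[OF A B] isolated by metis
  moreover have "aff_dim (max_set A lam x) \<ge> 1" "aff_dim (max_set B mu x) \<ge> 1"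
    using hyp mem_trop_hyp_iff[OF A] mem_trop_hyp_iff[OF B] by blast+
  moreover have "aff_dim (max_set A lam x) + aff_dim (max_set B mu x) \<le> 3"
    using aff_dim_max_set_plus[OF hyp] aff_dim_le_DIM[of "max_set A lam x + max_set B mu x"] by simp
  ultimately have "aff_dim (max_set A lam x) + aff_dim (max_set B mu x) = 3" by (smt (verit))
  then show "x \<in> trop_hyp A lam \<and> x \<in> trop_hyp B mu \<and> aff_dim (max_set A lam x + max_set B mu x) = 3"
    using hyp aff_dim_max_set_plus[OF hyp] by simp
next
  assume x: "x \<in> trop_hyp A lam \<and> x \<in> trop_hyp B mu \<and> aff_dim (max_set A lam x + max_set B mu x) = 3"
  have "y = x" if "max_set A lam y = max_set A lam x" "max_set B mu y = max_set B mu x" for y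
    using x that max_set_trop_mult[OF A B, of lam mu]
    by (intro eq_if_full_dim_subset_max_sets[of "max_set A lam x + max_set B mu x"]) auto
  then show "x \<in> inter_vertices A lam B mu"
    using x unfolding inter_vertices_def inter_cell_def by auto
qed

text \<open>The maximal cells of \<open>Subdiv\<^sub>U\<close> are translates of maximal cells of either factor
  (at vertices of one surface lying off the other) or mixed cells dual to vertices of
  \<open>X \<inter> Y\<close>.\<close>
lemma trop_vertices_trop_mult:
  "trop_vertices (trop_mult_exps A B) (trop_mult_coeff A lam B mu)
    = trop_vertices A lam \<union> trop_vertices B mu \<union> inter_vertices A lam B mu"
proof -
  have le3: "aff_dim (max_set A lam x + max_set B mu x) \<le> 3" for x
    using aff_dim_le_DIM[of "max_set A lam x + max_set B mu x"] by simp
  have mono: "aff_dim (max_set A lam x) \<le> aff_dim (max_set A lam x + max_set B mu x)"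
    "aff_dim (max_set B mu x) \<le> aff_dim (max_set A lam x + max_set B mu x)" for x
    using aff_dim_set_plus_ge[of "max_set B mu x" "max_set A lam x"]
      aff_dim_set_plus_ge[of "max_set A lam x" "max_set B mu x"]
      max_set_nonempty[OF A] max_set_nonempty[OF B] by (simp_all add: add.commute)
  have "aff_dim (max_set A lam x + max_set B mu x) = 3 \<longleftrightarrow>
      aff_dim (max_set A lam x) = 3 \<or> aff_dim (max_set B mu x) = 3 \<or> x \<in> inter_vertices A lam B mu"
    for x
  proof
    assume full: "aff_dim (max_set A lam x + max_set B mu x) = 3"
    show "aff_dim (max_set A lam x) = 3 \<or> aff_dim (max_set B mu x) = 3 \<or> x \<in> inter_vertices A lam B mu"
    proof (cases "x \<in> trop_hyp A lam \<and> x \<in> trop_hyp B mu")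
      case True
      then show ?thesis using full inter_vertices_iff by blast
    next
      case False
      then obtain a b where "max_set A lam x = {a} \<or> max_set B mu x = {b}"
        using max_set_singleton_if_not_mem_trop_hyp[OF A] max_set_singleton_if_not_mem_trop_hyp[OF B]
        by blast
      then show ?thesis
        using full by (auto simp: singleton_plus_eq_translation aff_dim_translation_eq)
    qed
  qed (use mono[of x] le3[of x] inter_vertices_iff[of x] in auto)
  then show ?thesis
    unfolding trop_vertices_def max_set_trop_mult[OF A B] by auto
qed

lemma trop_vertices_inter_vertices_disjoint:
  "trop_vertices A lam \<inter> trop_vertices B mu = {}"
  "(trop_vertices A lam \<union> trop_vertices B mu) \<inter> inter_vertices A lam B mu = {}"
proof -
  have "trop_vertices A lam \<subseteq> trop_hyp A lam" "trop_vertices B mu \<subseteq> trop_hyp B mu"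
    using mem_trop_hyp_iff[OF A] mem_trop_hyp_iff[OF B] unfolding trop_vertices_def by auto
  moreover have "inter_vertices A lam B mu \<subseteq> trop_hyp A lam \<inter> trop_hyp B mu"
    using inter_vertices_iff by blast
  ultimately show "trop_vertices A lam \<inter> trop_vertices B mu = {}"
    "(trop_vertices A lam \<union> trop_vertices B mu) \<inter> inter_vertices A lam B mu = {}"
    using trop_vertices_disjoint_trop_hyp by blast+
qed

lemma measure_max_set_plus_at_trop_vertices:
  shows "x \<in> trop_vertices A lam \<Longrightarrow>
      measure lebesgue (convex hull (max_set A lam x + max_set B mu x))
      = measure lebesgue (convex hull (max_set A lam x))"
    and "x \<in> trop_vertices B mu \<Longrightarrow>
      measure lebesgue (convex hull (max_set A lam x + max_set B mu x))
      = measure lebesgue (convex hull (max_set B mu x))"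
  using max_set_singleton_if_not_mem_trop_hyp[OF A] max_set_singleton_if_not_mem_trop_hyp[OF B]
    trop_vertices_disjoint_trop_hyp
  by (metis singleton_plus_eq_translation measure_convex_hull_translation)+

lemma sum_int_mult_inter_vertices:
  "(\<Sum>P\<in>inter_vertices A lam B mu. int_mult A lam B mu P)
    = 2 * (measure lebesgue (convex hull (A + B)) - measure lebesgue (convex hull A)
           - measure lebesgue (convex hull B))"
proof -
  define m where "m x = measure lebesgue (convex hull (max_set A lam x + max_set B mu x))" for x
  define VA VB IV where "VA = trop_vertices A lam" "VB = trop_vertices B mu"
    "IV = inter_vertices A lam B mu"
  have C: "finite (trop_mult_exps A B)" "trop_mult_exps A B \<noteq> {}"
    using A B by (auto simp: trop_mult_exps_eq_set_plus finite_set_plus set_plus_def)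
  have "finite VA" "finite VB" "finite IV"
    using finite_trop_vertices[OF C(1), of "trop_mult_coeff A lam B mu"] unfolding trop_vertices_trop_mult VA_VB_IV_def by simp_all
  have "measure lebesgue (convex hull (A + B)) = measure lebesgue (convex hull (trop_mult_exps A B))"
    by (simp add: trop_mult_exps_eq_set_plus)
  also have "\<dots> = sum m (VA \<union> VB \<union> IV)"
    unfolding m_def VA_VB_IV_def trop_vertices_trop_mult[symmetric] max_set_trop_mult[OF A B, symmetric]
    by (rule sum_measure_maximal_cells[OF C, symmetric])
  also have "\<dots> = sum m VA + sum m VB + sum m IV"
    using \<open>finite VA\<close> \<open>finite VB\<close> \<open>finite IV\<close> trop_vertices_inter_vertices_disjoint
    by (simp add: VA_VB_IV_def sum.union_disjoint)
  also have "sum m VA = measure lebesgue (convex hull A)"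
    using sum_measure_maximal_cells[OF A] measure_max_set_plus_at_trop_vertices(1)
    unfolding m_def VA_VB_IV_def by simp
  also have "sum m VB = measure lebesgue (convex hull B)"
    using sum_measure_maximal_cells[OF B] measure_max_set_plus_at_trop_vertices(2)
    unfolding m_def VA_VB_IV_def by simp
  moreover have "(\<Sum>P\<in>inter_vertices A lam B mu. int_mult A lam B mu P) = 2 * sum m IV"
    by (simp add: VA_VB_IV_def m_def int_mult_def dual_cell_U_def max_set_trop_mult[OF A B]
        sum_distrib_left)
  ultimately show ?thesis by simp
qed

end

theorem theorem3p2:
  fixes A B :: "(real^3) set" and lam mu :: "real^3 \<Rightarrow> real" and d e :: nat
  assumes "smooth_trop A lam d" and "smooth_trop B mu e"
    and "transversal A lam B mu"
  shows "(\<Sum>P\<in>inter_vertices A lam B mu. int_mult A lam B mu P) = real (d * e * (d + e))"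
proof -
  have A: "finite A" "A \<noteq> {}" "convex hull A = std_simplex d"
    and B: "finite B" "B \<noteq> {}" "convex hull B = std_simplex e"
    using assms(1,2) unfolding smooth_trop_def trop_poly_def by auto
  have "convex hull (A + B) = std_simplex (d + e)"
    by (simp add: convex_hull_set_plus A(3) B(3) std_simplex_add)
  then have "(\<Sum>P\<in>inter_vertices A lam B mu. int_mult A lam B mu P)
      = 2 * (real (d + e) ^ 3 / 6 - real d ^ 3 / 6 - real e ^ 3 / 6)"
    using sum_int_mult_inter_vertices[OF A(1,2) B(1,2) assms(3)] A(3) B(3)
    by (simp add: measure_std_simplex)
  then show ?thesis by (simp add: power3_eq_cube field_simps)
qed

end
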